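(* Consider a spherically symmetric spacetime in the setting described in the context, belonging to Case 1 (that is, $\partial_v r_-=0$, so $x_-(v)\equiv 0$). Then the spacetime is either of Type 1 or of Type 2, i.e. the quantities $U^{(\pm)}$ satisfy $-1<U^{(+)}_0<U^{(+)}_\infty\le U^{(-)}_0<+1$, with equality $U^{(+)}_\infty=U^{(-)}_0$ (Type 1) or strict inequality $U^{(+)}_\infty<U^{(-)}_0$ (Type 2).
   Context: Consider a spherically symmetric spacetime with metric $ds^2=-f(v,r)A(v,r)^2dv^2+2A(v,r)\,dr\,dv+r^2d\Omega^2$, where $d\Omega^2$ is the unit 2-sphere metric, $A>0$, $\lim_{r\to\infty}f=\lim_{r\to\infty}A=1$, and $f(v,0)=1$, $\partial_rf(v,0)=0$, $\partial_rA(v,0)=0$. It is assumed that $f(v,\cdot)=0$ has exactly two roots $r_+(v)>r_-(v)$ (the outer and inner apparent horizons, AHs), so $f(v,r)=F(v,r)(r-r_+(v))(r-r_-(v))$ with $F>0$; set $h=AF>0$. Standing assumptions: (1) $\partial_v r_+<0$; (2) $\lim_{v\to\infty}r_\pm(v)=r_c$; (3) the sign of $\partial_v r_-$ never changes; (4) the limits as $v\to\infty$ of $A,F,h$ behave as analytic functions of $r$, so all $\partial_r^n h(v,r)$ converge to finite values as $v\to\infty$; $h_c:=\lim_{v\to\infty}h(v,r_c)$. Put $x=r-r_c$, $x_\pm(v)=r_\pm(v)-r_c$ (so $x_\pm\to 0$), and regard $h$ as a function of $(v,x)$. Radially outgoing null geodesics are the solutions of $dx/dv=\tfrac12 h(v,x)(x-x_+(v))(x-x_-(v))$.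 Compactified outgoing null coordinate: fix $v_0$ and work in $v\ge v_0$; set $U=\frac{2}{\pi}\arctan((v-v_0)/r_c)$ on $\{r=0,\,v\ge v_0\}$ and $U=-\frac{2}{\pi}\arctan(r/r_c)$ on $\{v=v_0,\,r>0\}$, and extend $U$ by requiring it to be constant along each radially outgoing null geodesic; $U$ ranges over $[-1,1]$ ($U=+1$ corresponds to $v=\infty$ on $r=0$, $U=-1$ to $r=\infty$ on $v=v_0$). The outer and inner AHs lie at $U=U^{(\pm)}(v)$; $U^{(\pm)}_0=U^{(\pm)}(v_0)$ and $U^{(\pm)}_\infty=\lim_{v\to\infty}U^{(\pm)}(v)$. A Case 1 spacetime is of Type 1 if $U^{(+)}_\infty=U^{(-)}_0$ and of Type 2 if $U^{(+)}_\infty<U^{(-)}_0$. *)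

theory Defs
  imports "HOL-Analysis.Analysis"
begin

definition f_of :: "(real \<Rightarrow> real \<Rightarrow> real) \<Rightarrow> (real \<Rightarrow> real) \<Rightarrow> (real \<Rightarrow> real)
    \<Rightarrow> real \<Rightarrow> real \<Rightarrow> real" where
  "f_of F rp rm v r = F v r * (r - rp v) * (r - rm v)"

definition C1_on2 :: "(real \<Rightarrow> real \<Rightarrow> real) \<Rightarrow> (real \<times> real) set \<Rightarrow> bool" where
  "C1_on2 g S \<longleftrightarrow> (\<exists>gv gr. continuous_on S gv \<and> continuous_on S gr \<and>
      (\<forall>p\<in>S. ((\<lambda>q. g (fst q) (snd q)) has_derivative
                 (\<lambda>d. gv p * fst d + gr p * snd d)) (at p)))"

definition real_analytic_on :: "(real \<Rightarrow> real) \<Rightarrow> real set \<Rightarrow> bool" where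
  "real_analytic_on g T \<longleftrightarrow> (\<forall>r0\<in>T. \<exists>\<delta>>0. \<exists>c::nat \<Rightarrow> real.
      \<forall>r. \<bar>r - r0\<bar> < \<delta> \<longrightarrow> (\<lambda>n. c n * (r - r0) ^ n) sums g r)"

definition outgoing_null :: "(real \<Rightarrow> real \<Rightarrow> real) \<Rightarrow> (real \<Rightarrow> real \<Rightarrow> real)
    \<Rightarrow> (real \<Rightarrow> real) \<Rightarrow> real \<Rightarrow> real \<Rightarrow> bool" where
  "outgoing_null A f \<gamma> a b \<longleftrightarrow> a \<le> b \<and>
     (\<forall>t\<in>{a..b}. (\<gamma> has_real_derivative (A t (\<gamma> t) * f t (\<gamma> t) / 2)) (at t within {a..b}))"

text \<open>Compactified outgoing null coordinate U at (v,r), v \<ge> v0, r \<ge> 0: follow the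
  outgoing null geodesic through (v,r) into the past until it either reaches the
  centre r = 0 at some time a \<ge> v0 (U = 2/pi arctan((a-v0)/rc)) or reaches v = v0 at
  some radius r0 > 0 (U = -2/pi arctan(r0/rc)).\<close>
definition Ucoord :: "(real \<Rightarrow> real \<Rightarrow> real) \<Rightarrow> (real \<Rightarrow> real \<Rightarrow> real) \<Rightarrow> real \<Rightarrow> real
    \<Rightarrow> real \<Rightarrow> real \<Rightarrow> real" where
  "Ucoord A f rc v0 v r = (THE u. \<exists>\<gamma> a. v0 \<le> a \<and> outgoing_null A f \<gamma> a v \<and> \<gamma> v = r \<and>
      (\<forall>t\<in>{a<..v}. \<gamma> t > 0) \<and>
      ((\<gamma> a = 0 \<and> u = 2 / pi * arctan ((a - v0) / rc)) \<or>
       (a = v0 \<and> \<gamma> v0 > 0 \<and> u = - 2 / pi * arctan (\<gamma> v0 / rc))))"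

end

(* In Case 1 the inner horizon is the constant radius r_- = r_c, an equilibrium of the outgoing
   null geodesic equation dr/dv = A f / 2, so by uniqueness of solutions no outgoing ray reaches it.
   Where a ray meets the outer horizon its slope vanishes while r_+ strictly decreases, so a ray
   ending on r_+ stays strictly below r_+ in the past. Hence the ray through (v, r_+(v)), followed
   back to v0, stays in (r_c, r_+(v0)] and U^(+)(v) = -2/pi arctan (rho(v) / r_c), where rho(v) is
   its radius at v0. Rays do not cross, so rho strictly decreases to some L in [r_c, r_+(v0)), and
   U^(+)_inf = -2/pi arctan (L / r_c) lies strictly above U^(+)_0 = -2/pi arctan (r_+(v0) / r_c)
   and at most at U^(-)_0 = -2/pi arctan 1.
   The rays exist by Picard iteration and are unique by Gronwall's inequality. Only the C^1
   regularity of A and F, the horizon data and Case 1 are used. *)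

theory Submission
  imports Defs
begin

section \<open>Scalar ODEs: uniqueness and comparison\<close>

definition solves_ode_on :: "(real \<Rightarrow> real \<Rightarrow> real) \<Rightarrow> (real \<Rightarrow> real) \<Rightarrow> real \<Rightarrow> real \<Rightarrow> bool" where
  "solves_ode_on G y a b \<longleftrightarrow>
     (\<forall>t\<in>{a..b}. (y has_real_derivative G t (y t)) (at t within {a..b}))"

lemma solves_ode_on_subinterval:
  assumes "solves_ode_on G y a b" "a \<le> a'" "b' \<le> b"
  shows "solves_ode_on G y a' b'"
  using assms unfolding solves_ode_on_def
  by (auto intro: DERIV_subset[where s = "{a..b}"])

lemma solves_ode_on_continuous: "solves_ode_on G y a b \<Longrightarrow> continuous_on {a..b} y"
  unfolding solves_ode_on_def by (rule DERIV_continuous_on) blast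

lemma has_real_derivative_nonneg_imp_le:
  fixes g :: "real \<Rightarrow> real"
  assumes "a \<le> b"
    and "\<And>x. x \<in> {a..b} \<Longrightarrow> (g has_real_derivative g' x) (at x within {a..b})"
    and "\<And>x. x \<in> {a..b} \<Longrightarrow> 0 \<le> g' x"
  shows "g a \<le> g b"
proof -
  obtain x where "x \<in> {a..b}" "g b - g a = g' x * (b - a)"
    using mvt_very_simple[of a b g "\<lambda>x h. g' x * h"] assms
    by (auto simp: has_field_derivative_def)
  with assms show ?thesis by (metis diff_ge_0_iff_ge zero_le_mult_iff)
qed

lemma gronwall_vanishing:
  fixes Q Q' :: "real \<Rightarrow> real"
  assumes deriv: "\<And>s. s \<in> {a..b} \<Longrightarrow> (Q has_real_derivative Q' s) (at s within {a..b})"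
    and growth: "\<And>s. s \<in> {a..b} \<Longrightarrow> \<bar>Q' s\<bar> \<le> K * Q s"
    and nonneg: "\<And>s. s \<in> {a..b} \<Longrightarrow> 0 \<le> Q s"
    and zero: "t0 \<in> {a..b}" "Q t0 = 0"
    and t: "t \<in> {a..b}"
  shows "Q t = 0"
proof -
  have deriv': "(Q has_real_derivative Q' s) (at s within {x..y})"
    if "{x..y} \<subseteq> {a..b}" "s \<in> {x..y}" for x y s
    using DERIV_subset[OF deriv that(1)] that by auto
  have "Q t \<le> 0"
  proof (cases "t0 \<le> t")
    case True
    have "- Q t0 * exp (- K * t0) \<le> - Q t * exp (- K * t)"
    proof (rule has_real_derivative_nonneg_imp_le[where g = "\<lambda>s. - Q s * exp (- K * s)"])
      fix s assume s: "s \<in> {t0..t}"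
      with zero t have "s \<in> {a..b}" by auto
      with growth[of s] show "0 \<le> - (Q' s - K * Q s) * exp (- K * s)"
        by (intro mult_nonneg_nonneg) auto
      show "((\<lambda>s. - Q s * exp (- K * s)) has_real_derivative
          - (Q' s - K * Q s) * exp (- K * s)) (at s within {t0..t})"
        using s zero t
        by (auto intro!: derivative_eq_intros deriv' simp: algebra_simps)
    qed (use True in auto)
    with zero show ?thesis by (simp add: mult_le_0_iff)
  next
    case False
    have "Q t * exp (K * t) \<le> Q t0 * exp (K * t0)"
    proof (rule has_real_derivative_nonneg_imp_le[where g = "\<lambda>s. Q s * exp (K * s)"])
      fix s assume s: "s \<in> {t..t0}"
      with zero t have "s \<in> {a..b}" by auto
      with growth[of s] show "0 \<le> (Q' s + K * Q s) * exp (K * s)"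
        by (intro mult_nonneg_nonneg) auto
      show "((\<lambda>s. Q s * exp (K * s)) has_real_derivative
          (Q' s + K * Q s) * exp (K * s)) (at s within {t..t0})"
        using s zero t
        by (auto intro!: derivative_eq_intros deriv' simp: algebra_simps)
    qed (use False in auto)
    with zero show ?thesis by (simp add: mult_le_0_iff)
  qed
  with nonneg[OF t] show ?thesis by simp
qed

lemma ode_solution_unique:
  assumes y: "solves_ode_on G y a b" and z: "solves_ode_on G z a b"
    and range: "\<And>t. t \<in> {a..b} \<Longrightarrow> y t \<in> I" "\<And>t. t \<in> {a..b} \<Longrightarrow> z t \<in> I"
    and lipschitz: "\<And>t. t \<in> {a..b} \<Longrightarrow> L-lipschitz_on I (G t)"
    and agree: "t0 \<in> {a..b}" "y t0 = z t0"
    and t: "t \<in> {a..b}"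
  shows "y t = z t"
proof -
  have "(y t - z t)\<^sup>2 = 0"
  proof (rule gronwall_vanishing[where Q = "\<lambda>s. (y s - z s)\<^sup>2" and K = "2 * L"])
    fix s assume s: "s \<in> {a..b}"
    have "(y has_real_derivative G s (y s)) (at s within {a..b})"
      "(z has_real_derivative G s (z s)) (at s within {a..b})"
      using y z s by (auto simp: solves_ode_on_def)
    then show "((\<lambda>s. (y s - z s)\<^sup>2) has_real_derivative
        2 * (y s - z s) * (G s (y s) - G s (z s))) (at s within {a..b})"
      by (auto intro!: derivative_eq_intros)
    have "\<bar>G s (y s) - G s (z s)\<bar> \<le> L * \<bar>y s - z s\<bar>"
      using lipschitz_onD[OF lipschitz[OF s] range[OF s]] by (simp add: dist_real_def)
    then have "\<bar>2 * (y s - z s) * (G s (y s) - G s (z s))\<bar>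
        \<le> 2 * (\<bar>y s - z s\<bar> * (L * \<bar>y s - z s\<bar>))"
      unfolding abs_mult abs_numeral mult.assoc by (intro mult_left_mono) auto
    also have "\<dots> = 2 * L * (y s - z s)\<^sup>2"
      by (simp add: power2_eq_square algebra_simps flip: abs_mult)
    finally show "\<bar>2 * (y s - z s) * (G s (y s) - G s (z s))\<bar> \<le> 2 * L * (y s - z s)\<^sup>2" .
  qed (use agree t in auto)
  then show ?thesis by simp
qed

lemma last_nonneg_point:
  fixes D :: "real \<Rightarrow> real"
  assumes cont: "continuous_on {x..y} D" and "x \<le> y" "0 \<le> D x"
  obtains s where "s \<in> {x..y}" "0 \<le> D s" "\<And>u. s < u \<Longrightarrow> u \<le> y \<Longrightarrow> D u < 0"
proof -
  define Z where "Z = {s \<in> {x..y}. 0 \<le> D s}"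
  have "closed Z" unfolding Z_def
    by (intro continuous_on_closed_Collect_le continuous_on_const cont) simp
  moreover have "x \<in> Z" using assms by (simp add: Z_def)
  moreover have "bdd_above Z" unfolding Z_def by (rule bdd_aboveI[of _ y]) auto
  ultimately have "Sup Z \<in> Z" by (intro closed_contains_Sup) auto
  moreover have "D u < 0" if "Sup Z < u" "u \<le> y" for u
    using that cSup_upper[OF _ \<open>bdd_above Z\<close>, of u] \<open>Sup Z \<in> Z\<close> by (force simp: Z_def)
  ultimately show ?thesis using that by (auto simp: Z_def)
qed

lemma upcrossing_zeros_imp_negative:
  fixes D :: "real \<Rightarrow> real"
  assumes cont: "continuous_on {a..b} D"
    and end_zero: "D b = 0"
    and upcrossing: "\<And>s. s \<in> {a..b} \<Longrightarrow> D s = 0 \<Longrightarrow>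
        \<exists>l>0. (D has_real_derivative l) (at s within {a..b})"
    and t0: "t0 \<in> {a..<b}"
  shows "D t0 < 0"
proof (rule ccontr)
  assume "\<not> D t0 < 0"
  obtain l where "l > 0" "(D has_real_derivative l) (at b within {a..b})"
    using upcrossing[OF _ end_zero] t0 by auto
  from has_real_derivative_pos_inc_left[OF this(2,1)] obtain \<delta> where \<delta>: "\<delta> > 0"
    and left_of_b: "\<And>h. h > 0 \<Longrightarrow> b - h \<in> {a..b} \<Longrightarrow> h < \<delta> \<Longrightarrow> D (b - h) < 0"
    using end_zero by metis
  have "t0 \<le> b - \<delta>"
    using left_of_b[of "b - t0"] t0 \<open>\<not> D t0 < 0\<close> by force
  moreover have "continuous_on {t0..b - \<delta> / 2} D"
    by (rule continuous_on_subset[OF cont]) (use t0 \<delta> in auto)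
  ultimately obtain ts where ts: "ts \<in> {t0..b - \<delta> / 2}" "0 \<le> D ts"
    and after_ts: "\<And>u. ts < u \<Longrightarrow> u \<le> b - \<delta> / 2 \<Longrightarrow> D u < 0"
    using last_nonneg_point[of t0 "b - \<delta> / 2" D] \<delta> \<open>\<not> D t0 < 0\<close> by auto
  have ts_ab: "ts \<in> {a..<b}" using ts t0 \<delta> by auto
  have right_of_ts: "D s < 0" if "ts < s" "s < b" for s
    using after_ts[of s] left_of_b[of "b - s"] that ts_ab by (cases "s \<le> b - \<delta> / 2") auto
  show False
  proof (cases "D ts = 0")
    case True
    obtain l where "l > 0" "(D has_real_derivative l) (at ts within {a..b})"
      using upcrossing[OF _ True] ts_ab by auto
    from has_real_derivative_pos_inc_right[OF this(2,1)] obtain e where e: "e > 0"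
      and inc: "\<And>h. h > 0 \<Longrightarrow> ts + h \<in> {a..b} \<Longrightarrow> h < e \<Longrightarrow> D ts < D (ts + h)"
      by blast
    define h where "h = min e (b - ts) / 2"
    have h: "0 < h" "h < e" "ts + h < b" using e ts_ab by (auto simp: h_def min_def field_simps)
    then have "D ts < D (ts + h)" using inc ts_ab by auto
    with right_of_ts[of "ts + h"] h True show False by auto
  next
    case False
    then have "0 < D ts" using ts by simp
    moreover have "D ((ts + b) / 2) < 0" using right_of_ts ts_ab by auto
    moreover have "continuous_on {ts..(ts + b) / 2} D"
      by (rule continuous_on_subset[OF cont]) (use ts_ab in auto)
    ultimately obtain x where "ts \<le> x" "x \<le> (ts + b) / 2" "D x = 0"
      using IVT2'[of D "(ts + b) / 2" 0 ts] ts_ab by auto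
    with right_of_ts[of x] \<open>0 < D ts\<close> ts_ab show False by (cases "x = ts") auto
  qed
qed

text \<open>Where the solution meets the curve its slope is \<open>0\<close> and the curve's is negative, so it
  can only cross the curve upwards.\<close>
lemma ode_solution_below_decreasing_curve:
  fixes y p :: "real \<Rightarrow> real"
  assumes y: "solves_ode_on G y a b"
    and p_decreasing: "\<And>t. \<exists>d. (p has_real_derivative d) (at t) \<and> d < 0"
    and end_on_curve: "y b = p b"
    and flat_on_curve: "\<And>t. t \<in> {a..b} \<Longrightarrow> y t = p t \<Longrightarrow> G t (y t) = 0"
    and t0: "t0 \<in> {a..<b}"
  shows "y t0 < p t0"
proof -
  obtain p' where p': "\<And>t. (p has_real_derivative p' t) (at t)" "\<And>t. p' t < 0"
    using p_decreasing by metis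
  have deriv: "((\<lambda>s. y s - p s) has_real_derivative G s (y s) - p' s) (at s within {a..b})"
    if "s \<in> {a..b}" for s
    using y that unfolding solves_ode_on_def
    by (intro derivative_intros has_field_derivative_at_within[OF p'(1)]) auto
  have "y t0 - p t0 < 0"
  proof (rule upcrossing_zeros_imp_negative[OF DERIV_continuous_on[OF deriv] _ _ t0])
    fix s assume "s \<in> {a..b}" "y s - p s = 0"
    with deriv[of s] flat_on_curve[of s] p'(2)[of s]
    show "\<exists>l>0. ((\<lambda>s. y s - p s) has_real_derivative l) (at s within {a..b})"
      by (intro exI[of _ "- p' s"]) auto
  qed (use end_on_curve in auto)
  then show ?thesis by simp
qed

lemma ode_solution_above_equilibrium:
  assumes y: "solves_ode_on G y a b"
    and range: "\<And>t. t \<in> {a..b} \<Longrightarrow> y t \<in> I" and "c \<in> I"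
    and lipschitz: "\<And>t. t \<in> {a..b} \<Longrightarrow> L-lipschitz_on I (G t)"
    and equilibrium: "\<And>t. t \<in> {a..b} \<Longrightarrow> G t c = 0"
    and end_above: "c < y b"
    and t: "t \<in> {a..b}"
  shows "c < y t"
proof (rule ccontr)
  assume "\<not> c < y t"
  then obtain x where x: "x \<in> {t..b}" "y x = c"
    using IVT'[of y t c b] end_above t
      continuous_on_subset[OF solves_ode_on_continuous[OF y], of "{t..b}"] by auto
  have "solves_ode_on G (\<lambda>_. c) a b"
    using equilibrium by (simp add: solves_ode_on_def)
  then have "y b = c"
    using ode_solution_unique[OF y _ range _ lipschitz, of "\<lambda>_. c" x b] x t \<open>c \<in> I\<close> by auto
  with end_above show False by simp
qed

section \<open>Existence by weighted Picard iteration\<close>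

lemma integral_exp_weight:
  fixes lam :: real
  assumes "lam \<noteq> 0" "t \<le> b"
  shows "integral {t..b} (\<lambda>s. exp (lam * (b - s))) = (exp (lam * (b - t)) - 1) / lam"
proof -
  have "((\<lambda>s. exp (lam * (b - s))) has_integral
      (- exp (lam * (b - b)) / lam - - exp (lam * (b - t)) / lam)) {t..b}"
  proof (rule fundamental_theorem_of_calculus[OF assms(2)])
    fix x assume "x \<in> {t..b}"
    show "((\<lambda>s. - exp (lam * (b - s)) / lam) has_vector_derivative exp (lam * (b - x)))
        (at x within {t..b})"
      unfolding has_real_derivative_iff_has_vector_derivative[symmetric]
      using assms(1) by (auto intro!: derivative_eq_intros)
  qed
  then show ?thesis by (simp add: integral_unique diff_divide_distrib)
qed

lemma continuous_on_compose_graph: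
  fixes G :: "real \<Rightarrow> real \<Rightarrow> real"
  assumes "continuous_on UNIV (\<lambda>q. G (fst q) (snd q))" "continuous_on T z"
  shows "continuous_on T (\<lambda>s. G s (z s))"
  using continuous_on_compose2[OF assms(1) continuous_on_Pair[OF continuous_on_id assms(2)]] by simp

lemma exp_weighted_integral_lipschitz:
  fixes G :: "real \<Rightarrow> real \<Rightarrow> real" and u1 u2 :: "real \<Rightarrow>\<^sub>C real"
  assumes cont: "continuous_on UNIV (\<lambda>q. G (fst q) (snd q))"
    and lipschitz: "\<And>t. L-lipschitz_on UNIV (G t)"
    and w_def: "w = (\<lambda>s. exp ((2 * L + 1) * (b - s)))" and t: "t \<le> b"
  shows "\<bar>integral {t..b} (\<lambda>s. G s (u1 s * w s)) - integral {t..b} (\<lambda>s. G s (u2 s * w s))\<bar>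
    \<le> w t / 2 * dist u1 u2"
proof -
  define D where "D = dist u1 u2"
  have L: "0 \<le> L" using lipschitz_on_nonneg[OF lipschitz] .
  have w_pos: "0 < w s" for s by (simp add: w_def)
  have integrable: "(\<lambda>s. G s (u s * w s)) integrable_on {t..b}" for u :: "real \<Rightarrow>\<^sub>C real"
    unfolding w_def
    by (intro integrable_continuous_interval continuous_on_compose_graph[OF cont] continuous_intros) simp
  have "\<bar>G s (u1 s * w s) - G s (u2 s * w s)\<bar> \<le> L * D * w s" for s
  proof -
    have "\<bar>G s (u1 s * w s) - G s (u2 s * w s)\<bar> \<le> L * (\<bar>u1 s - u2 s\<bar> * w s)"
      using lipschitz_onD[OF lipschitz, of "u1 s * w s" "u2 s * w s" s] w_pos[of s]
      by (simp add: dist_real_def abs_mult left_diff_distrib[symmetric])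
    also have "\<dots> \<le> L * (D * w s)"
      using dist_bounded[of u1 s u2] w_pos[of s] L
      by (intro mult_left_mono mult_right_mono) (auto simp: D_def dist_real_def)
    finally show ?thesis by simp
  qed
  then have "norm (integral {t..b} (\<lambda>s. G s (u1 s * w s) - G s (u2 s * w s)))
      \<le> integral {t..b} (\<lambda>s. L * D * w s)"
    using integrable
    by (intro integral_norm_bound_integral integrable_diff)
      (auto intro!: integrable_continuous_interval continuous_intros simp: w_def)
  also have "\<dots> = L * D * ((w t - 1) / (2 * L + 1))"
    using integral_exp_weight[of "2 * L + 1" t b] L t by (simp add: w_def)
  also have "\<dots> \<le> w t / 2 * D"
    using L w_pos[of t] by (simp add: D_def field_simps)
  finally show ?thesis
    using integrable by (simp add: D_def integral_diff)
qed

text \<open>Picard iteration, made contractive on the whole interval by the weight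
  \<open>exp ((2 * L + 1) * (b - t))\<close> (Bielecki's trick).\<close>
lemma integral_equation_solution_exists:
  fixes G :: "real \<Rightarrow> real \<Rightarrow> real"
  assumes ab: "a \<le> b"
    and cont: "continuous_on UNIV (\<lambda>q. G (fst q) (snd q))"
    and lipschitz: "\<And>t. L-lipschitz_on UNIV (G t)"
  obtains y where "continuous_on UNIV y"
    "\<And>t. t \<in> {a..b} \<Longrightarrow> y t = y0 - integral {t..b} (\<lambda>s. G s (y s))"
proof -
  define w where "w = (\<lambda>s. exp ((2 * L + 1) * (b - s)))"
  have w_pos: "0 < w t" for t by (simp add: w_def)
  have w_cont: "continuous_on T w" for T unfolding w_def by (intro continuous_intros)
  define \<Phi> where "\<Phi> u t = (y0 - integral {t..b} (\<lambda>s. G s (u s * w s))) / w t"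
    for u :: "real \<Rightarrow>\<^sub>C real" and t
  have "continuous_on {a..b} (\<Phi> u)" for u
    unfolding \<Phi>_def using w_pos
    by (intro continuous_intros w_cont DERIV_continuous_on[OF integral_has_real_derivative']
        continuous_on_compose_graph[OF cont]) (auto simp: less_imp_neq[symmetric])
  then have "\<forall>u. \<exists>g :: real \<Rightarrow>\<^sub>C real. \<forall>x. g x = \<Phi> u (clamp a b x)"
    by (metis continuous_on_cbox_bcontfunE cbox_interval)
  then obtain P :: "(real \<Rightarrow>\<^sub>C real) \<Rightarrow> (real \<Rightarrow>\<^sub>C real)"
    where P: "\<And>u x. P u x = \<Phi> u (clamp a b x)" by metis
  have "dist (P u1) (P u2) \<le> 1 / 2 * dist u1 u2" for u1 u2
  proof (rule dist_bound)
    fix x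
    define t where "t = clamp a b x"
    have t: "t \<in> {a..b}" using clamp_in_interval[of a b x] ab by (simp add: t_def)
    have "dist (P u1 x) (P u2 x)
        = \<bar>integral {t..b} (\<lambda>s. G s (u1 s * w s)) - integral {t..b} (\<lambda>s. G s (u2 s * w s))\<bar> / w t"
      using w_pos[of t]
      by (simp add: P t_def[symmetric] \<Phi>_def dist_real_def diff_divide_distrib[symmetric]
          abs_minus_commute)
    also have "\<dots> \<le> w t / 2 * dist u1 u2 / w t"
      using exp_weighted_integral_lipschitz[OF cont lipschitz w_def, of t u1 u2] t w_pos[of t]
      by (intro divide_right_mono) auto
    finally show "dist (P u1 x) (P u2 x) \<le> 1 / 2 * dist u1 u2"
      using w_pos[of t] by simp
  qed
  then obtain u where u: "P u = u"
    using banach_fix_type[of "1 / 2" P] by auto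
  show ?thesis
  proof
    show "continuous_on UNIV (\<lambda>t. u t * w t)" by (intro continuous_intros w_cont) simp
    fix t assume "t \<in> {a..b}"
    then have "u t = \<Phi> u t"
      using P[of u t] clamp_cancel_cbox[of t a b] by (simp add: u)
    then show "u t * w t = y0 - integral {t..b} (\<lambda>s. G s (u s * w s))"
      using w_pos[of t] by (simp add: \<Phi>_def)
  qed
qed

lemma ode_terminal_value_exists:
  fixes G :: "real \<Rightarrow> real \<Rightarrow> real"
  assumes ab: "a \<le> b"
    and cont: "continuous_on UNIV (\<lambda>q. G (fst q) (snd q))"
    and lipschitz: "\<And>t. L-lipschitz_on UNIV (G t)"
  obtains y where "y b = y0" "solves_ode_on G y a b"
proof -
  obtain y where y_cont: "continuous_on UNIV y"
    and y: "\<And>t. t \<in> {a..b} \<Longrightarrow> y t = y0 - integral {t..b} (\<lambda>s. G s (y s))"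
    using integral_equation_solution_exists[OF ab cont lipschitz] by blast
  have "continuous_on {a..b} (\<lambda>s. G s (y s))"
    using continuous_on_compose_graph[OF cont continuous_on_subset[OF y_cont]] by simp
  then have "((\<lambda>t. y0 - integral {t..b} (\<lambda>s. G s (y s))) has_real_derivative G t (y t))
      (at t within {a..b})" if "t \<in> {a..b}" for t
    using integral_has_real_derivative'[OF _ that] by (auto intro!: derivative_eq_intros)
  then have "(y has_real_derivative G t (y t)) (at t within {a..b})" if "t \<in> {a..b}" for t
    by (rule has_field_derivative_transform_within[OF _ zero_less_one that]) (use that y in auto)
  then have "solves_ode_on G y a b" by (simp add: solves_ode_on_def)
  moreover have "y b = y0" using y[of b] ab by simp
  ultimately show ?thesis using that by blast
qed

section \<open>Lipschitz bounds from continuous partial derivatives\<close>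

lemma uniformly_lipschitz_on_rectangle:
  fixes \<phi> :: "real \<Rightarrow> real \<Rightarrow> real" and \<phi>\<^sub>r :: "real \<times> real \<Rightarrow> real"
  assumes deriv: "\<And>t r. (t, r) \<in> S \<Longrightarrow> (\<phi> t has_real_derivative \<phi>\<^sub>r (t, r)) (at r)"
    and cont: "continuous_on S \<phi>\<^sub>r"
    and rectangle: "{a..b} \<times> {m..M} \<subseteq> S"
  obtains L where "\<And>t. t \<in> {a..b} \<Longrightarrow> L-lipschitz_on {m..M} (\<phi> t)"
proof -
  have "compact (\<phi>\<^sub>r ` ({a..b} \<times> {m..M}))"
    by (intro compact_continuous_image continuous_on_subset[OF cont rectangle]
        compact_Times compact_Icc)
  then obtain B where B: "0 < B" "\<And>q. q \<in> {a..b} \<times> {m..M} \<Longrightarrow> \<bar>\<phi>\<^sub>r q\<bar> \<le> B"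
    by (auto dest!: compact_imp_bounded simp: bounded_pos)
  have "B-lipschitz_on {m..M} (\<phi> t)" if t: "t \<in> {a..b}" for t
  proof (rule lipschitz_onI)
    fix r s assume "r \<in> {m..M}" "s \<in> {m..M}"
    have "norm (\<phi> t r - \<phi> t s) \<le> B * norm (r - s)"
    proof (rule field_differentiable_bound[of "{m..M}"])
      fix z assume z: "z \<in> {m..M}"
      show "(\<phi> t has_field_derivative \<phi>\<^sub>r (t, z)) (at z within {m..M})"
        using t z rectangle by (auto intro!: has_field_derivative_at_within deriv)
      show "norm (\<phi>\<^sub>r (t, z)) \<le> B" using t z by (auto intro!: B(2))
    qed (use \<open>r \<in> {m..M}\<close> \<open>s \<in> {m..M}\<close> in auto)
    then show "dist (\<phi> t r) (\<phi> t s) \<le> B * dist r s" by (simp add: dist_real_def)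
  qed (use B in simp)
  then show ?thesis using that by blast
qed

lemma C1_on2_continuous:
  assumes "C1_on2 \<phi> S"
  shows "continuous_on S (\<lambda>q. \<phi> (fst q) (snd q))"
proof -
  obtain \<phi>\<^sub>v \<phi>\<^sub>r where "\<forall>p\<in>S. ((\<lambda>q. \<phi> (fst q) (snd q)) has_derivative
      (\<lambda>d. \<phi>\<^sub>v p * fst d + \<phi>\<^sub>r p * snd d)) (at p)"
    using assms unfolding C1_on2_def by blast
  then show ?thesis
    by (intro continuous_at_imp_continuous_on) (use has_derivative_continuous in blast)
qed

lemma C1_on2_partial_derivative:
  assumes "C1_on2 \<phi> S"
  obtains \<phi>\<^sub>r where "continuous_on S \<phi>\<^sub>r"
    "\<And>t r. (t, r) \<in> S \<Longrightarrow> (\<phi> t has_real_derivative \<phi>\<^sub>r (t, r)) (at r)"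
proof -
  obtain \<phi>\<^sub>v \<phi>\<^sub>r where cont: "continuous_on S \<phi>\<^sub>r" and deriv: "\<forall>p\<in>S.
      ((\<lambda>q. \<phi> (fst q) (snd q)) has_derivative (\<lambda>d. \<phi>\<^sub>v p * fst d + \<phi>\<^sub>r p * snd d)) (at p)"
    using assms unfolding C1_on2_def by blast
  have "(\<phi> t has_real_derivative \<phi>\<^sub>r (t, r)) (at r)" if "(t, r) \<in> S" for t r
  proof -
    have "((\<lambda>q. \<phi> (fst q) (snd q)) \<circ> Pair t has_derivative
        (\<lambda>d. \<phi>\<^sub>v (t, r) * fst d + \<phi>\<^sub>r (t, r) * snd d) \<circ> Pair 0) (at r)"
      using deriv that by (intro diff_chain_at) (auto intro!: derivative_eq_intros)
    then show ?thesis by (simp add: o_def has_field_derivative_def mult_commute_abs)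
  qed
  with cont that show ?thesis by blast
qed

section \<open>Outgoing null rays through the outer horizon\<close>

lemma antimono_tendsto_Inf_at_top:
  fixes \<rho> :: "real \<Rightarrow> real"
  assumes antimono: "\<And>v w. v0 \<le> v \<Longrightarrow> v \<le> w \<Longrightarrow> \<rho> w \<le> \<rho> v"
    and bdd: "bdd_below (\<rho> ` {v0..})"
  shows "(\<rho> \<longlongrightarrow> Inf (\<rho> ` {v0..})) at_top"
proof (rule order_tendstoI)
  fix y assume y: "y < Inf (\<rho> ` {v0..})"
  have "y < \<rho> v" if "v0 \<le> v" for v
    using less_le_trans[OF y cInf_lower[OF _ bdd]] that by simp
  then show "eventually (\<lambda>v. y < \<rho> v) at_top"
    unfolding eventually_at_top_linorder by blast
next
  fix y assume "Inf (\<rho> ` {v0..}) < y"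
  then obtain v1 where v1: "v0 \<le> v1" "\<rho> v1 < y"
    using cInf_lessD[of "\<rho> ` {v0..}" y] by auto
  have "\<rho> v < y" if "v1 \<le> v" for v
    using antimono[OF v1(1) that] v1(2) by linarith
  then show "eventually (\<lambda>v. \<rho> v < y) at_top"
    unfolding eventually_at_top_linorder by blast
qed

definition U_initial :: "real \<Rightarrow> real \<Rightarrow> real" where
  "U_initial rc r = - 2 / pi * arctan (r / rc)"

lemma Ucoord_eqI:
  assumes ray: "outgoing_null A f \<gamma> v0 v" "\<gamma> v = r" "\<And>t. t \<in> {v0..v} \<Longrightarrow> 0 < \<gamma> t"
    and unique: "\<And>\<gamma>' a. v0 \<le> a \<Longrightarrow> outgoing_null A f \<gamma>' a v \<Longrightarrow> \<gamma>' v = r \<Longrightarrow>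
        (\<And>t. t \<in> {a..v} \<Longrightarrow> 0 \<le> \<gamma>' t) \<Longrightarrow> \<gamma>' a = 0 \<or> a = v0 \<Longrightarrow> a = v0 \<and> \<gamma>' v0 = \<gamma> v0"
  shows "Ucoord A f rc v0 v r = U_initial rc (\<gamma> v0)"
  unfolding Ucoord_def U_initial_def
proof (rule the_equality, goal_cases)
  case 1
  show ?case
    using ray by (intro exI[of _ \<gamma>] exI[of _ v0]) (auto simp: outgoing_null_def)
next
  case (2 u)
  then obtain \<gamma>' a where a: "v0 \<le> a" "outgoing_null A f \<gamma>' a v" "\<gamma>' v = r"
    and pos: "\<forall>t\<in>{a<..v}. \<gamma>' t > 0"
    and start: "(\<gamma>' a = 0 \<and> u = 2 / pi * arctan ((a - v0) / rc)) \<or>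
       (a = v0 \<and> \<gamma>' v0 > 0 \<and> u = - 2 / pi * arctan (\<gamma>' v0 / rc))"
    by blast
  have "0 \<le> \<gamma>' t" if "t \<in> {a..v}" for t
    using that pos start by (cases "t = a") (auto intro: less_imp_le)
  with a start have "a = v0" "\<gamma>' v0 = \<gamma> v0" using unique by blast+
  with start ray(3)[of v0] a show ?case by (auto simp: outgoing_null_def)
qed

text \<open>\<open>G\<close> is the right-hand side \<open>A f / 2\<close> of the outgoing null geodesic equation, \<open>p\<close> the
  outer horizon \<open>r\<^sub>+\<close> and \<open>c\<close> the constant inner horizon \<open>r\<^sub>- = r\<^sub>c\<close> of Case 1.\<close>
locale outgoing_rays =
  fixes G :: "real \<Rightarrow> real \<Rightarrow> real" and p :: "real \<Rightarrow> real" and c v0 :: real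
  assumes c_pos: "0 < c"
    and G_continuous: "continuous_on {q. 0 \<le> snd q} (\<lambda>q. G (fst q) (snd q))"
    and G_lipschitz: "\<And>a b M. \<exists>L. \<forall>t\<in>{a..b}. L-lipschitz_on {0..M} (G t)"
    and G_equilibrium: "\<And>t. G t c = 0"
    and G_horizon: "\<And>t. G t (p t) = 0"
    and p_decreasing: "\<And>t. \<exists>d. (p has_real_derivative d) (at t) \<and> d < 0"
    and c_below_p: "\<And>t. c < p t"
begin

lemma p_antimono: "s \<le> t \<Longrightarrow> p t \<le> p s"
  using DERIV_neg_imp_decreasing[of s t p] p_decreasing by (cases "s = t") force+

lemma nonneg_solution_above_equilibrium:
  assumes \<gamma>: "solves_ode_on G \<gamma> a v" and nonneg: "\<And>t. t \<in> {a..v} \<Longrightarrow> 0 \<le> \<gamma> t"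
    and "c < \<gamma> v" "t \<in> {a..v}"
  shows "c < \<gamma> t"
proof -
  have "bounded (\<gamma> ` {a..v})"
    by (intro compact_imp_bounded compact_continuous_image solves_ode_on_continuous[OF \<gamma>]) simp
  then obtain M where M: "\<forall>t\<in>{a..v}. \<bar>\<gamma> t\<bar> \<le> M"
    unfolding bounded_iff by auto
  obtain L where L: "\<And>t. t \<in> {a..v} \<Longrightarrow> L-lipschitz_on {0..max M c} (G t)"
    using G_lipschitz by blast
  have range: "\<gamma> t \<in> {0..max M c}" if "t \<in> {a..v}" for t
    using bspec[OF M that] nonneg[OF that] by (auto simp: le_max_iff_disj)
  have c_range: "c \<in> {0..max M c}" using c_pos by simp
  show ?thesis
    by (rule ode_solution_above_equilibrium[OF \<gamma> range c_range L G_equilibrium])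
      (use assms(3,4) in auto)
qed

definition horizon_ray :: "real \<Rightarrow> (real \<Rightarrow> real) \<Rightarrow> bool" where
  "horizon_ray v \<gamma> \<longleftrightarrow> solves_ode_on G \<gamma> v0 v \<and> \<gamma> v = p v \<and> (\<forall>t\<in>{v0..v}. 0 \<le> \<gamma> t)"

lemma horizon_ray_below_horizon:
  "horizon_ray v \<gamma> \<Longrightarrow> t \<in> {v0..<v} \<Longrightarrow> \<gamma> t < p t"
  unfolding horizon_ray_def
  by (intro ode_solution_below_decreasing_curve[where G = G, OF _ p_decreasing])
    (auto simp: G_horizon)

lemma horizon_ray_range:
  assumes "horizon_ray v \<gamma>" "t \<in> {v0..v}"
  shows "\<gamma> t \<in> {c<..p v0}"
proof -
  have "\<gamma> t \<le> p t"
  proof (cases "t = v")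
    case False
    with horizon_ray_below_horizon[OF assms(1), of t] assms(2) show ?thesis by simp
  qed (use assms(1) in \<open>simp add: horizon_ray_def\<close>)
  moreover have "c < \<gamma> t"
    using nonneg_solution_above_equilibrium[of \<gamma> v0 v] assms c_below_p[of v]
    by (simp add: horizon_ray_def)
  ultimately show ?thesis using p_antimono[of v0 t] assms(2) by auto
qed

lemma horizon_ray_unique:
  assumes "horizon_ray v \<gamma>" "horizon_ray v \<gamma>'" "t \<in> {v0..v}"
  shows "\<gamma> t = \<gamma>' t"
proof -
  obtain L where L: "\<And>t. t \<in> {v0..v} \<Longrightarrow> L-lipschitz_on {0..p v0} (G t)"
    using G_lipschitz by blast
  have range: "\<gamma> s \<in> {0..p v0}" "\<gamma>' s \<in> {0..p v0}" if "s \<in> {v0..v}" for s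
    using horizon_ray_range[OF assms(1) that] horizon_ray_range[OF assms(2) that] c_pos by auto
  from assms have "solves_ode_on G \<gamma> v0 v" "solves_ode_on G \<gamma>' v0 v" "\<gamma> v = \<gamma>' v" "v \<in> {v0..v}"
    by (auto simp: horizon_ray_def)
  from ode_solution_unique[OF this(1,2) range L this(4,3) assms(3)] show ?thesis .
qed

text \<open>The equation is first solved with \<open>G\<close> frozen outside \<open>[v0, v] \<times> [c, p v0]\<close>, which
  makes it globally Lipschitz; the solution never reaches the frozen region.\<close>
lemma horizon_ray_exists:
  assumes v: "v0 \<le> v"
  obtains \<gamma> where "horizon_ray v \<gamma>"
proof -
  define R where "R = p v0"
  define H where "H t r = G (max v0 (min v t)) (max c (min R r))" for t r
  have cR: "c < R" using c_below_p by (simp add: R_def)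
  obtain L where L: "\<forall>t\<in>{v0..v}. L-lipschitz_on {0..R} (G t)"
    using G_lipschitz by blast
  have clamp: "1-lipschitz_on UNIV (\<lambda>r. max c (min R r))"
    by (rule lipschitz_onI) (auto simp: dist_real_def)
  have H_lipschitz: "(L * 1)-lipschitz_on UNIV (H t)" for t
  proof -
    have "L-lipschitz_on ((\<lambda>r. max c (min R r)) ` UNIV) (G (max v0 (min v t)))"
      by (rule lipschitz_on_subset[OF L[rule_format]]) (use v cR c_pos in auto)
    from lipschitz_on_compose2[OF clamp this] show ?thesis by (simp add: H_def)
  qed
  define \<kappa> where "\<kappa> q = (max v0 (min v (fst q)), max c (min R (snd q)))" for q
  have "continuous_on UNIV (\<lambda>q. G (fst (\<kappa> q)) (snd (\<kappa> q)))"
    unfolding \<kappa>_def using c_pos cR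
    by (intro continuous_on_compose2[OF G_continuous]) (auto intro!: continuous_intros)
  then have H_continuous: "continuous_on UNIV (\<lambda>q. H (fst q) (snd q))"
    by (simp add: H_def \<kappa>_def)
  obtain y where y_end: "y v = p v" and y: "solves_ode_on H y v0 v"
    using ode_terminal_value_exists[OF v H_continuous H_lipschitz] by blast
  have above: "c < y t" if "t \<in> {v0..v}" for t
    by (rule ode_solution_above_equilibrium[OF y _ _ H_lipschitz _ _ that])
      (use y_end c_below_p[of v] cR in \<open>auto simp: H_def G_equilibrium\<close>)
  have below: "y t \<le> p t" if "t \<in> {v0..v}" for t
  proof (cases "t = v")
    case False
    have "H s (y s) = 0" if "s \<in> {v0..v}" "y s = p s" for s
      using that c_below_p[of s] p_antimono[of v0 s] G_horizon[of s]
      by (simp add: H_def R_def)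
    with False \<open>t \<in> {v0..v}\<close> show ?thesis
      using ode_solution_below_decreasing_curve[OF y p_decreasing y_end] by fastforce
  qed (use y_end in simp)
  have "H t (y t) = G t (y t)" if "t \<in> {v0..v}" for t
    using that above[OF that] below[OF that] p_antimono[of v0 t] by (simp add: H_def R_def)
  then have "horizon_ray v y"
    using y y_end above c_pos
    by (force simp: horizon_ray_def solves_ode_on_def)
  then show ?thesis using that by blast
qed

text \<open>At time \<open>v\<close> the later ray is still strictly below the horizon, where the earlier one ends,
  and two rays cannot meet.\<close>
lemma horizon_ray_start_strict_antimono:
  assumes v: "v0 \<le> v" "v < v'" and \<gamma>: "horizon_ray v \<gamma>" and \<gamma>': "horizon_ray v' \<gamma>'"
  shows "\<gamma>' v0 < \<gamma> v0"
proof (rule ccontr)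
  assume "\<not> \<gamma>' v0 < \<gamma> v0"
  moreover have "\<gamma>' v < \<gamma> v"
    using horizon_ray_below_horizon[OF \<gamma>', of v] \<gamma> v by (simp add: horizon_ray_def)
  moreover have \<gamma>'_sol: "solves_ode_on G \<gamma>' v0 v"
    using \<gamma>' v by (auto simp: horizon_ray_def intro: solves_ode_on_subinterval)
  moreover have \<gamma>_sol: "solves_ode_on G \<gamma> v0 v"
    using \<gamma> by (simp add: horizon_ray_def)
  moreover have "continuous_on {v0..v} (\<lambda>t. \<gamma>' t - \<gamma> t)"
    by (intro continuous_intros solves_ode_on_continuous[OF \<gamma>'_sol] solves_ode_on_continuous[OF \<gamma>_sol])
  ultimately obtain x where x: "x \<in> {v0..v}" "\<gamma>' x = \<gamma> x"
    using IVT2'[of "\<lambda>t. \<gamma>' t - \<gamma> t" v 0 v0] v by auto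
  obtain L where L: "\<And>t. t \<in> {v0..v} \<Longrightarrow> L-lipschitz_on {0..p v0} (G t)"
    using G_lipschitz by blast
  have range: "\<gamma>' s \<in> {0..p v0}" "\<gamma> s \<in> {0..p v0}" if "s \<in> {v0..v}" for s
    using horizon_ray_range[OF \<gamma> that] horizon_ray_range[OF \<gamma>', of s] that v c_pos by auto
  have "\<gamma>' v = \<gamma> v"
    using ode_solution_unique[OF \<gamma>'_sol \<gamma>_sol range L x] v by simp
  with \<open>\<gamma>' v < \<gamma> v\<close> show False by simp
qed

lemma Ucoord_horizon:
  assumes G_def: "G = (\<lambda>t r. A t r * f t r / 2)" and v: "v0 \<le> v" and \<gamma>: "horizon_ray v \<gamma>"
  shows "Ucoord A f rc v0 v (p v) = U_initial rc (\<gamma> v0)"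
proof (rule Ucoord_eqI)
  have "solves_ode_on G \<gamma> v0 v" using \<gamma> by (simp add: horizon_ray_def)
  then show "outgoing_null A f \<gamma> v0 v"
    using v by (simp add: outgoing_null_def solves_ode_on_def G_def)
  show "\<gamma> v = p v" using \<gamma> by (simp add: horizon_ray_def)
  show "0 < \<gamma> t" if "t \<in> {v0..v}" for t
    using horizon_ray_range[OF \<gamma> that] c_pos by simp
next
  fix \<gamma>' a
  assume a: "v0 \<le> a" and "outgoing_null A f \<gamma>' a v" and end_on_horizon: "\<gamma>' v = p v"
    and nonneg: "\<And>t. t \<in> {a..v} \<Longrightarrow> 0 \<le> \<gamma>' t" and start: "\<gamma>' a = 0 \<or> a = v0"
  then have \<gamma>': "solves_ode_on G \<gamma>' a v" and "a \<le> v"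
    by (auto simp: outgoing_null_def solves_ode_on_def G_def)
  then have "c < \<gamma>' a"
    using nonneg_solution_above_equilibrium[OF \<gamma>' nonneg] end_on_horizon c_below_p[of v] by auto
  with start c_pos have "a = v0" by auto
  with \<gamma>' nonneg end_on_horizon have "horizon_ray v \<gamma>'" by (simp add: horizon_ray_def)
  with horizon_ray_unique[OF \<gamma> this, of v0] v \<open>a = v0\<close> show "a = v0 \<and> \<gamma>' v0 = \<gamma> v0" by simp
qed

lemma horizon_Ucoord_limit:
  assumes G_def: "G = (\<lambda>t r. A t r * f t r / 2)"
  obtains L where "((\<lambda>v. Ucoord A f rc v0 v (p v)) \<longlongrightarrow> U_initial rc L) at_top"
    "c \<le> L" "L < p v0"
proof -
  define \<rho> where "\<rho> v = (SOME \<gamma>. horizon_ray v \<gamma>) v0" for v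
  have ray: "horizon_ray v (SOME \<gamma>. horizon_ray v \<gamma>)" if "v0 \<le> v" for v
    by (metis horizon_ray_exists[OF that] someI)
  have \<rho>_range: "\<rho> v \<in> {c<..p v0}" if "v0 \<le> v" for v
    using horizon_ray_range[OF ray[OF that]] that by (simp add: \<rho>_def)
  have \<rho>_decreasing: "\<rho> w < \<rho> v" if "v0 \<le> v" "v < w" for v w
    using horizon_ray_start_strict_antimono[OF that ray ray] that by (simp add: \<rho>_def)
  define L where "L = Inf (\<rho> ` {v0..})"
  have bdd: "bdd_below (\<rho> ` {v0..})"
    using \<rho>_range by (intro bdd_belowI[of _ c]) (auto intro: less_imp_le)
  have "(\<rho> \<longlongrightarrow> L) at_top"
    unfolding L_def using \<rho>_decreasing bdd
    by (intro antimono_tendsto_Inf_at_top) (auto simp: le_less)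
  then have "((\<lambda>v. U_initial rc (\<rho> v)) \<longlongrightarrow> U_initial rc L) at_top"
    unfolding U_initial_def divide_inverse by (intro tendsto_intros)
  moreover have "eventually (\<lambda>v. U_initial rc (\<rho> v) = Ucoord A f rc v0 v (p v)) at_top"
    unfolding eventually_at_top_linorder \<rho>_def
    by (intro exI[of _ v0] allI impI Ucoord_horizon[OF G_def, symmetric] ray)
  ultimately have "((\<lambda>v. Ucoord A f rc v0 v (p v)) \<longlongrightarrow> U_initial rc L) at_top"
    by (rule Lim_transform_eventually)
  moreover have "c \<le> L"
    unfolding L_def using \<rho>_range by (intro cInf_greatest) (auto intro: less_imp_le)
  moreover have "L < p v0"
    using cInf_lower[OF _ bdd, of "\<rho> (v0 + 1)"] \<rho>_decreasing[of v0 "v0 + 1"] \<rho>_range[of v0]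
    by (auto simp: L_def)
  ultimately show ?thesis using that by blast
qed

end

lemma zero_derivative_tendsto_imp_const:
  fixes g :: "real \<Rightarrow> real"
  assumes "\<And>v. (g has_real_derivative 0) (at v)" and "(g \<longlongrightarrow> l) at_top"
  shows "g = (\<lambda>_. l)"
proof -
  have g_const: "g v = g 0" for v
    using DERIV_isconst_all assms(1) by blast
  have "((\<lambda>_ :: real. g 0) \<longlongrightarrow> l) at_top"
    using assms(2) by (rule Lim_transform_eventually) (intro always_eventually allI g_const)
  then have "g 0 = l" by (simp add: tendsto_const_iff)
  with g_const show ?thesis by auto
qed

lemma U_initial_bounds: "- 1 < U_initial rc r" "U_initial rc r < 1"
  using arctan_bounded[of "r / rc"] by (auto simp: U_initial_def field_simps)

lemma U_initial_strict_antimono: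
  assumes "0 < rc" "r < s"
  shows "U_initial rc s < U_initial rc r"
proof -
  have "arctan (r / rc) < arctan (s / rc)"
    using assms by (simp add: arctan_less_iff divide_strict_right_mono)
  then show ?thesis by (simp add: U_initial_def divide_strict_right_mono)
qed

lemma U_initial_antimono:
  assumes "0 < rc" "r \<le> s"
  shows "U_initial rc s \<le> U_initial rc r"
proof -
  have "arctan (r / rc) \<le> arctan (s / rc)"
    using assms by (simp add: arctan_le_iff divide_right_mono)
  then show ?thesis by (simp add: U_initial_def divide_right_mono)
qed

lemma Ucoord_initial_slice:
  assumes "0 < r"
  shows "Ucoord A f rc v0 v0 r = U_initial rc r"
proof -
  have "at v0 within {v0..v0} = bot" by (simp add: at_within_def)
  then have "Ucoord A f rc v0 v0 r = U_initial rc ((\<lambda>_. r) v0)"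
    using assms by (intro Ucoord_eqI) (auto simp: outgoing_null_def)
  then show ?thesis by simp
qed

lemma outgoing_rays_metric:
  assumes S: "{q. 0 \<le> snd q} \<subseteq> S" "C1_on2 A S" "C1_on2 F S"
    and c: "0 < c" "\<And>t. c < p t"
    and p_decreasing: "\<And>t. \<exists>d. (p has_real_derivative d) (at t) \<and> d < 0"
  shows "outgoing_rays (\<lambda>t r. A t r * f_of F p (\<lambda>_. c) t r / 2) p c"
proof
  have "continuous_on UNIV p"
    using p_decreasing by (metis DERIV_isCont continuous_at_imp_continuous_on)
  then have p_cont: "continuous_on T (\<lambda>q. p (fst q))" for T
    by (rule continuous_on_compose2[of UNIV]) (auto intro: continuous_intros)
  show "continuous_on {q. 0 \<le> snd q}
      (\<lambda>q. A (fst q) (snd q) * f_of F p (\<lambda>_. c) (fst q) (snd q) / 2)"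
    unfolding f_of_def
    by (intro continuous_intros p_cont continuous_on_subset[OF C1_on2_continuous S(1)] S(2,3)) auto
  obtain A\<^sub>r F\<^sub>r where A\<^sub>r: "continuous_on S A\<^sub>r"
      "\<And>t r. (t, r) \<in> S \<Longrightarrow> (A t has_real_derivative A\<^sub>r (t, r)) (at r)"
    and F\<^sub>r: "continuous_on S F\<^sub>r"
      "\<And>t r. (t, r) \<in> S \<Longrightarrow> (F t has_real_derivative F\<^sub>r (t, r)) (at r)"
    using C1_on2_partial_derivative[OF S(2)] C1_on2_partial_derivative[OF S(3)] by metis
  fix a b M
  show "\<exists>L. \<forall>t\<in>{a..b}. L-lipschitz_on {0..M} (\<lambda>r. A t r * f_of F p (\<lambda>_. c) t r / 2)"
  proof -
    define G\<^sub>r where "G\<^sub>r q = (A\<^sub>r q * F (fst q) (snd q) * (snd q - p (fst q)) * (snd q - c)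
      + A (fst q) (snd q) * F\<^sub>r q * (snd q - p (fst q)) * (snd q - c)
      + A (fst q) (snd q) * F (fst q) (snd q) * (2 * snd q - p (fst q) - c)) / 2" for q
    have deriv: "((\<lambda>r. A t r * f_of F p (\<lambda>_. c) t r / 2) has_real_derivative G\<^sub>r (t, r)) (at r)"
      if "(t, r) \<in> S" for t r
      unfolding f_of_def G\<^sub>r_def using A\<^sub>r(2)[OF that] F\<^sub>r(2)[OF that]
      by (auto intro!: derivative_eq_intros) (simp add: algebra_simps)
    have "continuous_on S G\<^sub>r"
      using C1_on2_continuous[OF S(2)] C1_on2_continuous[OF S(3)] unfolding G\<^sub>r_def
      by (intro continuous_intros A\<^sub>r(1) F\<^sub>r(1) p_cont) auto
    moreover have "{a..b} \<times> {0..M} \<subseteq> S" using S(1) by auto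
    ultimately obtain L where
      "\<And>t. t \<in> {a..b} \<Longrightarrow> L-lipschitz_on {0..M} (\<lambda>r. A t r * f_of F p (\<lambda>_. c) t r / 2)"
      using uniformly_lipschitz_on_rectangle[OF deriv] by blast
    then show ?thesis by blast
  qed
qed (use c in \<open>simp_all add: f_of_def p_decreasing\<close>)

theorem theorem1:
  fixes A F :: "real \<Rightarrow> real \<Rightarrow> real" and rp rm :: "real \<Rightarrow> real" and rc v0 :: real
  assumes regular: "\<exists>S. open S \<and> {p. snd p \<ge> 0} \<subseteq> S \<and> C1_on2 A S \<and> C1_on2 F S"
    and A_pos: "\<And>v r. r \<ge> 0 \<Longrightarrow> A v r > 0"
    and F_pos: "\<And>v r. r \<ge> 0 \<Longrightarrow> F v r > 0"
    and roots: "\<And>v. 0 < rm v \<and> rm v < rp v"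
    and f_centre: "\<And>v. f_of F rp rm v 0 = 1"
    and df_centre: "\<And>v. ((\<lambda>r. f_of F rp rm v r) has_real_derivative 0) (at 0)"
    and dA_centre: "\<And>v. ((\<lambda>r. A v r) has_real_derivative 0) (at 0)"
    and f_infty: "\<And>v. ((\<lambda>r. f_of F rp rm v r) \<longlongrightarrow> 1) at_top"
    and A_infty: "\<And>v. ((\<lambda>r. A v r) \<longlongrightarrow> 1) at_top"
    and rp_decr: "\<And>v. \<exists>d. (rp has_real_derivative d) (at v) \<and> d < 0"
    and rp_lim: "(rp \<longlongrightarrow> rc) at_top"
    and rm_lim: "(rm \<longlongrightarrow> rc) at_top"
    and case1: "\<And>v. (rm has_real_derivative 0) (at v)"
    and limits_analytic: "\<exists>Ainf Finf. (\<forall>r>0. ((\<lambda>v. A v r) \<longlongrightarrow> Ainf r) at_top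
          \<and> ((\<lambda>v. F v r) \<longlongrightarrow> Finf r) at_top)
        \<and> real_analytic_on Ainf {0<..} \<and> real_analytic_on Finf {0<..}
        \<and> real_analytic_on (\<lambda>r. Ainf r * Finf r) {0<..}"
    and h_smooth: "\<And>n v r. r > 0 \<Longrightarrow> (deriv ^^ n) (\<lambda>\<rho>. A v \<rho> * F v \<rho>) differentiable (at r)"
    and h_derivs_conv: "\<And>n r. r > 0 \<Longrightarrow>
        (\<exists>L. ((\<lambda>v. (deriv ^^ n) (\<lambda>\<rho>. A v \<rho> * F v \<rho>) r) \<longlongrightarrow> L) at_top)"
  shows "\<exists>Uinf.
     ((\<lambda>v. Ucoord A (f_of F rp rm) rc v0 v (rp v)) \<longlongrightarrow> Uinf) at_top \<and>
     -1 < Ucoord A (f_of F rp rm) rc v0 v0 (rp v0) \<and>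
     Ucoord A (f_of F rp rm) rc v0 v0 (rp v0) < Uinf \<and>
     Uinf \<le> Ucoord A (f_of F rp rm) rc v0 v0 (rm v0) \<and>
     Ucoord A (f_of F rp rm) rc v0 v0 (rm v0) < 1 \<and>
     (Uinf = Ucoord A (f_of F rp rm) rc v0 v0 (rm v0) \<or>
      Uinf < Ucoord A (f_of F rp rm) rc v0 v0 (rm v0))"
proof -
  obtain S where S: "{q. 0 \<le> snd q} \<subseteq> S" "C1_on2 A S" "C1_on2 F S"
    using regular by blast
  have rm: "rm = (\<lambda>_. rc)"
    using zero_derivative_tendsto_imp_const[OF case1 rm_lim] .
  have rc: "0 < rc" "\<And>t. rc < rp t"
    using roots by (simp_all add: rm)
  interpret outgoing_rays "\<lambda>t r. A t r * f_of F rp rm t r / 2" rp rc v0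
    unfolding rm by (rule outgoing_rays_metric[OF S rc rp_decr])
  obtain L where L: "((\<lambda>v. Ucoord A (f_of F rp rm) rc v0 v (rp v)) \<longlongrightarrow> U_initial rc L) at_top"
    "rc \<le> L" "L < rp v0"
    using horizon_Ucoord_limit[of A "f_of F rp rm" rc] by blast
  have U0: "Ucoord A (f_of F rp rm) rc v0 v0 (rp v0) = U_initial rc (rp v0)"
    "Ucoord A (f_of F rp rm) rc v0 v0 (rm v0) = U_initial rc rc"
    using Ucoord_initial_slice rc(1) rc(2)[of v0] by (simp_all add: rm)
  show ?thesis
    using L U0 U_initial_bounds U_initial_strict_antimono[OF rc(1) L(3)]
      U_initial_antimono[OF rc(1) L(2)]
    by (intro exI[of _ "U_initial rc L"]) auto
qed

end
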